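(* Let $q,m\in\mathbb{Z}$ and let $g(x,y)=a_0y^m\prod_{i=1}^n(xy^q-a_i)$ be a polynomial with $a_0\in\mathbb{C}\setminus\{0\}$ and $a_1,\dots,a_n\in\mathbb{C}$; its Newton polytope lies on the line $\ell=\{(t,qt+m):t\in\mathbb{R}\}$. Let $h(x,y)\in\mathbb{C}[x,y]$ be a polynomial such that every $(i,j)\in\mathrm{supp}(h)$ satisfies $j>qi+m$. Then there exists $\epsilon_0>0$ such that for every $0<\epsilon<\epsilon_0$ there exists $\delta>0$ such that for every $a\in\mathbb{C}$ with $0<|a|<\delta$ the following holds: if $\xi$ is a non-zero root of $g(x,a)$ of multiplicity $p$, then $g(x,a)+h(x,a)$ has exactly $p$ roots $\xi'$ (counted with multiplicity) satisfying $|\xi'-\xi|\le\epsilon|\xi|$.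
   Context: $\mathrm{supp}(h)$ is the set of exponent pairs $(i,j)$ of monomials $x^iy^j$ with non-zero coefficient in $h$; the Newton polytope is the convex hull of the support. *)

theory Defs
  imports "HOL-Computational_Algebra.Polynomial" "HOL-Analysis.Analysis"
begin

definition g_at :: "complex \<Rightarrow> (nat \<Rightarrow> complex) \<Rightarrow> nat \<Rightarrow> int \<Rightarrow> int \<Rightarrow> complex \<Rightarrow> complex poly" where
  "g_at a0 as n q m b = smult (a0 * b powi m) (\<Prod>i\<in>{1..n}. [: - as i, b powi q :])"

text \<open>A bivariate polynomial h in C[x,y] is given by its coefficient function hc on exponent
  pairs (i,j) (coefficient of x^i y^j), with finite support.\<close>
definition supp2 :: "(nat \<times> nat \<Rightarrow> complex) \<Rightarrow> (nat \<times> nat) set" where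
  "supp2 hc = {k. hc k \<noteq> 0}"

definition h_at :: "(nat \<times> nat \<Rightarrow> complex) \<Rightarrow> complex \<Rightarrow> complex poly" where
  "h_at hc b = (\<Sum>(i,j)\<in>supp2 hc. monom (hc (i,j) * b ^ j) i)"

end

theory Submission
  imports Defs "HOL-Complex_Analysis.Complex_Analysis"
begin

text \<open>Substituting t = b^q x turns g(x, b) into a0 b^m \<Prod>(t - a_i), so a non-zero root \<xi> of
  g(-, b) corresponds to some a_k \<noteq> 0, and the disc |x - \<xi>| \<le> \<epsilon>|\<xi>| to the disc
  |t - a_k| \<le> \<epsilon>|a_k|. If \<epsilon> is below half the relative distance between distinct non-zero a_i,
  this disc contains no other root of g, and on its boundary |g| \<ge> |a0| |b|^m (\<epsilon>\<alpha>)^n, where \<alpha> is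
  the least non-zero |a_i|. Every monomial of h lies strictly above the line j = qi + m, so on
  the same circle |h| = O(|b|^(m+1)). For small |b|, Rouche's theorem gives g + h as many roots
  in the disc as g, namely the multiplicity of \<xi>.\<close>

lemma poly_holomorphic_on_UNIV: "poly P holomorphic_on UNIV"
  using poly_holomorphic_on[of "\<lambda>w. w" UNIV P] by (simp add: holomorphic_on_ident)

lemma zorder_poly_eq_order:
  fixes P :: "complex poly"
  assumes "P \<noteq> 0"
  shows "zorder (poly P) z = int (order z P)"
proof -
  obtain Q where Q: "P = [:-z,1:] ^ order z P * Q" "\<not> [:-z,1:] dvd Q"
    using order_decomp[OF assms] by blast
  show ?thesis
  proof (rule zorder_eqI[of UNIV z "poly Q"])
    show "poly Q z \<noteq> 0"
      using Q(2) by (simp add: poly_eq_0_iff_dvd)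
    show "poly P w = poly Q w * (w - z) powi int (order z P)" for w
      by (subst Q(1)) (simp add: poly_power power_int_of_nat)
  qed (auto simp: poly_holomorphic_on_UNIV)
qed

lemma winding_zorder_sum_poly_circlepath:
  fixes P :: "complex poly"
  assumes "P \<noteq> 0" "r > 0" and off_circle: "\<And>z. cmod (z - c) = r \<Longrightarrow> poly P z \<noteq> 0"
  shows "(\<Sum>p\<in>{p\<in>UNIV. poly P p = 0}. winding_number (circlepath c r) p * zorder (poly P) p)
       = of_nat (\<Sum>z\<in>{z. poly P z = 0 \<and> cmod (z - c) \<le> r}. order z P)"
proof -
  have summand: "winding_number (circlepath c r) p * zorder (poly P) p
        = (if cmod (p - c) \<le> r then of_nat (order p P) else 0)" if "poly P p = 0" for p
  proof (cases "cmod (p - c) < r")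
    case True
    then show ?thesis
      using winding_number_circlepath[of p c r] zorder_poly_eq_order[OF assms(1)] by simp
  next
    case False
    with off_circle that have "p \<notin> cball c r"
      by (force simp: dist_norm norm_minus_commute)
    then have "winding_number (circlepath c r) p = 0"
      using \<open>r > 0\<close> by (intro winding_number_zero_outside[of _ "cball c r"])
        (auto simp: dist_norm norm_minus_commute)
    with False off_circle[of p] that show ?thesis by auto
  qed
  have "(\<Sum>p\<in>{p\<in>UNIV. poly P p = 0}. winding_number (circlepath c r) p * zorder (poly P) p)
      = (\<Sum>p\<in>{p. poly P p = 0}. if cmod (p - c) \<le> r then of_nat (order p P) else 0)"
    using summand by (intro sum.cong) auto
  also have "\<dots> = of_nat (\<Sum>z\<in>{z. poly P z = 0 \<and> cmod (z - c) \<le> r}. order z P)"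
    using poly_roots_finite[OF assms(1)]
    by (simp add: sum.inter_filter[symmetric] Collect_conj_eq)
  finally show ?thesis .
qed

lemma rouche_root_count_poly:
  fixes F H :: "complex poly"
  assumes "r > 0" "F \<noteq> 0"
    and smaller: "\<And>z. cmod (z - c) = r \<Longrightarrow> cmod (poly H z) < cmod (poly F z)"
  shows "(\<Sum>z\<in>{z. poly (F + H) z = 0 \<and> cmod (z - c) \<le> r}. order z (F + H))
       = (\<Sum>z\<in>{z. poly F z = 0 \<and> cmod (z - c) \<le> r}. order z F)"
proof -
  have off_F: "poly F z \<noteq> 0" and off_FH: "poly (F + H) z \<noteq> 0" if "cmod (z - c) = r" for z
    using smaller[OF that] by (auto simp: add_eq_0_iff2)
  have "poly (F + H) (c + of_real r) \<noteq> 0"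
    using off_FH \<open>r > 0\<close> by simp
  then have "F + H \<noteq> 0"
    by (metis poly_0)
  have FH: "(\<lambda>p. poly F p + poly H p) = poly (F + H)"
    by auto
  have "of_nat (\<Sum>z\<in>{z. poly (F + H) z = 0 \<and> cmod (z - c) \<le> r}. order z (F + H))
      = (\<Sum>p\<in>{p\<in>UNIV. poly (F + H) p = 0}. winding_number (circlepath c r) p * zorder (poly (F + H)) p)"
    by (rule winding_zorder_sum_poly_circlepath[OF \<open>F + H \<noteq> 0\<close> \<open>r > 0\<close> off_FH, symmetric])
  also have "\<dots> = (\<Sum>p\<in>{p\<in>UNIV. poly F p = 0}. winding_number (circlepath c r) p * zorder (poly F) p)"
    using Rouche_theorem[of UNIV "poly F" "poly H" "circlepath c r"] \<open>r > 0\<close> smaller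
      poly_roots_finite[OF \<open>F + H \<noteq> 0\<close>] poly_roots_finite[OF \<open>F \<noteq> 0\<close>]
    unfolding FH by (auto simp: dist_norm norm_minus_commute poly_holomorphic_on_UNIV)
  also have "\<dots> = of_nat (\<Sum>z\<in>{z. poly F z = 0 \<and> cmod (z - c) \<le> r}. order z F)"
    by (rule winding_zorder_sum_poly_circlepath[OF \<open>F \<noteq> 0\<close> \<open>r > 0\<close> off_F])
  finally show ?thesis
    by (simp only: of_nat_eq_iff)
qed

lemma poly_g_at:
  "poly (g_at a0 as n q m b) z = a0 * b powi m * (\<Prod>i\<in>{1..n}. b powi q * z - as i)"
  unfolding g_at_def by (simp add: poly_prod algebra_simps)

lemma poly_g_at_eq_0_iff:
  assumes "a0 \<noteq> 0" "b \<noteq> 0"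
  shows "poly (g_at a0 as n q m b) z = 0 \<longleftrightarrow> (\<exists>i\<in>{1..n}. b powi q * z = as i)"
  using assms by (simp add: poly_g_at)

lemma norm_poly_g_at_ge:
  assumes "L \<ge> 0" "\<And>i. i \<in> {1..n} \<Longrightarrow> L \<le> cmod (b powi q * z - as i)"
  shows "cmod a0 * cmod b powi m * L ^ n \<le> cmod (poly (g_at a0 as n q m b) z)"
proof -
  have "L ^ n \<le> (\<Prod>i\<in>{1..n}. cmod (b powi q * z - as i))"
    using prod_mono[of "{1..n}" "\<lambda>_. L"] assms by simp
  then show ?thesis
    by (simp add: poly_g_at norm_mult norm_power_int prod_norm[symmetric] mult_left_mono)
qed

lemma poly_h_at: "poly (h_at hc b) z = (\<Sum>(i,j)\<in>supp2 hc. hc (i,j) * b ^ j * z ^ i)"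
  unfolding h_at_def by (simp add: poly_sum poly_monom case_prod_beta)

text \<open>x^j y^i = (x^q y)^i x^(j - qi), and j - qi \<ge> m + 1 while x \<le> 1.\<close>
lemma monomial_above_line_le:
  fixes x y T :: real
  assumes "0 < x" "x \<le> 1" "0 \<le> y" "x powi q * y \<le> T" "int j > q * int i + m"
  shows "x ^ j * y ^ i \<le> T ^ i * x powi (m + 1)"
proof -
  have "x ^ j * y ^ i = (x powi q * y) ^ i * x powi (int j - q * int i)"
    using \<open>0 < x\<close> by (simp add: power_mult_distrib power_int_diff power_int_power' field_simps)
  also have "\<dots> \<le> T ^ i * x powi (m + 1)"
  proof (intro mult_mono power_mono power_int_decreasing)
    show "0 \<le> x powi q * y" "0 \<le> T ^ i"
      using assms by (simp_all add: order_trans[of 0 "x powi q * y" T])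
  qed (use assms in auto)
  finally show ?thesis .
qed

lemma norm_poly_h_at_le:
  assumes above: "\<forall>(i,j)\<in>supp2 hc. int j > q * int i + m"
    and "0 < cmod b" "cmod b \<le> 1" "cmod (b powi q * z) \<le> T"
  shows "cmod (poly (h_at hc b) z)
           \<le> (\<Sum>(i,j)\<in>supp2 hc. cmod (hc (i,j)) * T ^ i) * cmod b powi (m + 1)"
proof -
  have "cmod (poly (h_at hc b) z) \<le> (\<Sum>(i,j)\<in>supp2 hc. cmod (hc (i,j)) * (cmod b ^ j * cmod z ^ i))"
    unfolding poly_h_at case_prod_beta
    by (rule order_trans[OF norm_sum]) (simp add: norm_mult norm_power mult.assoc)
  also have "\<dots> \<le> (\<Sum>(i,j)\<in>supp2 hc. cmod (hc (i,j)) * (T ^ i * cmod b powi (m + 1)))"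
  proof (intro sum_mono, clarify)
    fix i j assume "(i, j) \<in> supp2 hc"
    then have "cmod b ^ j * cmod z ^ i \<le> T ^ i * cmod b powi (m + 1)"
      using assms by (intro monomial_above_line_le) (auto simp: norm_mult norm_power_int)
    then show "cmod (hc (i,j)) * (cmod b ^ j * cmod z ^ i) \<le> cmod (hc (i,j)) * (T ^ i * cmod b powi (m + 1))"
      by (simp add: mult_left_mono)
  qed
  finally show ?thesis
    by (simp add: sum_distrib_right case_prod_beta mult.assoc)
qed

lemma norm_poly_h_at_less_g_at:
  assumes "\<forall>(i,j)\<in>supp2 hc. int j > q * int i + m" "0 < cmod b" "cmod b \<le> 1"
    and "L \<ge> 0" "\<And>i. i \<in> {1..n} \<Longrightarrow> L \<le> cmod (b powi q * z - as i)"
    and "cmod (b powi q * z) \<le> T"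
    and small: "(\<Sum>(i,j)\<in>supp2 hc. cmod (hc (i,j)) * T ^ i) * cmod b < cmod a0 * L ^ n"
  shows "cmod (poly (h_at hc b) z) < cmod (poly (g_at a0 as n q m b) z)"
proof -
  have "cmod (poly (h_at hc b) z)
          \<le> (\<Sum>(i,j)\<in>supp2 hc. cmod (hc (i,j)) * T ^ i) * cmod b * cmod b powi m"
    using norm_poly_h_at_le[OF assms(1-3,6)] \<open>0 < cmod b\<close> by (simp add: power_int_add mult_ac)
  also have "\<dots> < cmod a0 * L ^ n * cmod b powi m"
    using small \<open>0 < cmod b\<close> by simp
  also have "\<dots> \<le> cmod (poly (g_at a0 as n q m b) z)"
    using norm_poly_g_at_ge[OF assms(4,5)] by (simp add: mult_ac)
  finally show ?thesis .
qed

definition rel_separated :: "real \<Rightarrow> (nat \<Rightarrow> complex) \<Rightarrow> nat set \<Rightarrow> bool" where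
  "rel_separated \<epsilon> as I \<longleftrightarrow>
     (\<forall>i\<in>I. \<forall>k\<in>I. as k \<noteq> 0 \<and> as i \<noteq> as k \<longrightarrow> 2 * \<epsilon> * cmod (as k) \<le> cmod (as i - as k))"

lemma rel_separated_mono:
  assumes "rel_separated \<epsilon>' as I" "\<epsilon> \<le> \<epsilon>'"
  shows "rel_separated \<epsilon> as I"
  using assms unfolding rel_separated_def
  by (meson mult_right_mono norm_ge_zero mult_le_cancel_left_pos order_trans zero_less_numeral)

lemma exists_rel_separated:
  assumes "finite I"
  shows "\<exists>\<epsilon>>0. rel_separated \<epsilon> as I"
proof -
  define P where "P = {(i, k) \<in> I \<times> I. as k \<noteq> 0 \<and> as i \<noteq> as k}"
  define \<epsilon> where "\<epsilon> = Min (insert 1 ((\<lambda>(i, k). cmod (as i - as k) / (2 * cmod (as k))) ` P))"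
  have "finite P"
    unfolding P_def using assms by (auto intro: finite_subset[of _ "I \<times> I"])
  then have "\<epsilon> > 0"
    unfolding \<epsilon>_def by (subst Min_gr_iff) (auto simp: P_def)
  moreover have "\<epsilon> \<le> cmod (as i - as k) / (2 * cmod (as k))" if "(i, k) \<in> P" for i k
    unfolding \<epsilon>_def using \<open>finite P\<close> that by (intro Min_le) force+
  then have "rel_separated \<epsilon> as I"
    unfolding rel_separated_def P_def by (auto simp: field_simps)
  ultimately show ?thesis
    by blast
qed

lemma exists_pos_le_norm_nonzero:
  fixes f :: "'a \<Rightarrow> 'b :: real_normed_vector"
  assumes "finite I"
  shows "\<exists>\<alpha>>0. \<forall>k\<in>I. f k \<noteq> 0 \<longrightarrow> \<alpha> \<le> norm (f k)"
proof -
  define \<alpha> where "\<alpha> = Min (insert 1 ((\<lambda>k. norm (f k)) ` {k\<in>I. f k \<noteq> 0}))"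
  have "\<alpha> > 0"
    unfolding \<alpha>_def using assms by (subst Min_gr_iff) auto
  moreover have "\<forall>k\<in>I. f k \<noteq> 0 \<longrightarrow> \<alpha> \<le> norm (f k)"
    unfolding \<alpha>_def using assms by (auto intro: Min_le)
  ultimately show ?thesis
    by blast
qed

lemma rel_separated_dist_ge:
  assumes "rel_separated \<epsilon> as I" "i \<in> I" "k \<in> I" "as k \<noteq> 0"
    and "cmod (t - as k) = \<epsilon> * cmod (as k)"
  shows "\<epsilon> * cmod (as k) \<le> cmod (t - as i)"
proof (cases "as i = as k")
  case False
  then have "2 * \<epsilon> * cmod (as k) \<le> cmod (as i - as k)"
    using assms unfolding rel_separated_def by blast
  moreover have "cmod (as i - as k) \<le> cmod (t - as i) + cmod (t - as k)"
    using norm_triangle_ineq4[of "t - as k" "t - as i"] by (simp add: norm_minus_commute)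
  ultimately show ?thesis
    using assms(5) by linarith
qed (use assms in simp)

lemma rel_separated_eq_if_close:
  assumes "rel_separated \<epsilon> as I" "i \<in> I" "k \<in> I" "as k \<noteq> 0" "\<epsilon> > 0"
    and "cmod (as i - as k) \<le> \<epsilon> * cmod (as k)"
  shows "as i = as k"
proof (rule ccontr)
  assume "as i \<noteq> as k"
  then have "2 * \<epsilon> * cmod (as k) \<le> cmod (as i - as k)"
    using assms unfolding rel_separated_def by blast
  moreover have "\<epsilon> * cmod (as k) > 0"
    using assms by simp
  ultimately show False
    using assms(6) by linarith
qed

lemma roots_g_at_in_disc:
  assumes "a0 \<noteq> 0" "b \<noteq> 0" "\<xi> \<noteq> 0" "poly (g_at a0 as n q m b) \<xi> = 0"
    and "\<epsilon> > 0" "rel_separated \<epsilon> as {1..n}"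
  shows "{z. poly (g_at a0 as n q m b) z = 0 \<and> cmod (z - \<xi>) \<le> \<epsilon> * cmod \<xi>} = {\<xi>}"
proof (intro equalityI subsetI)
  obtain k where k: "k \<in> {1..n}" "b powi q * \<xi> = as k"
    using assms(4) poly_g_at_eq_0_iff[OF assms(1,2)] by blast
  fix z assume "z \<in> {z. poly (g_at a0 as n q m b) z = 0 \<and> cmod (z - \<xi>) \<le> \<epsilon> * cmod \<xi>}"
  then obtain i where i: "i \<in> {1..n}" "b powi q * z = as i" and close: "cmod (z - \<xi>) \<le> \<epsilon> * cmod \<xi>"
    using poly_g_at_eq_0_iff[OF assms(1,2)] by blast
  have "cmod (as i - as k) = cmod (b powi q) * cmod (z - \<xi>)"
    by (simp flip: i(2) k(2) norm_mult add: algebra_simps)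
  also have "\<dots> \<le> \<epsilon> * cmod (as k)"
    using mult_left_mono[OF close norm_ge_zero[of "b powi q"]]
    by (simp flip: k(2) add: norm_mult mult_ac)
  moreover have "as k \<noteq> 0"
    using k(2) assms(2,3) by (auto simp flip: k(2))
  ultimately have "as i = as k"
    using rel_separated_eq_if_close[OF assms(6) i(1) k(1)] assms(5) by simp
  then have "b powi q * z = b powi q * \<xi>"
    using i(2) k(2) by simp
  then show "z \<in> {\<xi>}"
    using assms(2) by simp
qed (use assms in simp)

lemma root_count_near_root_g_at:
  assumes "a0 \<noteq> 0" and above: "\<forall>(i,j)\<in>supp2 hc. int j > q * int i + m"
    and b: "0 < cmod b" "cmod b \<le> 1"
    and \<xi>: "\<xi> \<noteq> 0" "poly (g_at a0 as n q m b) \<xi> = 0"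
    and \<epsilon>: "0 < \<epsilon>" "\<epsilon> \<le> 1" "rel_separated \<epsilon> as {1..n}"
    and \<alpha>: "0 < \<alpha>" "\<forall>k\<in>{1..n}. as k \<noteq> 0 \<longrightarrow> \<alpha> \<le> cmod (as k)"
    and M: "\<forall>k\<in>{1..n}. cmod (as k) \<le> M"
    and small: "(\<Sum>(i,j)\<in>supp2 hc. cmod (hc (i,j)) * (2 * M) ^ i) * cmod b < cmod a0 * (\<epsilon> * \<alpha>) ^ n"
  shows "(\<Sum>z\<in>{z. poly (g_at a0 as n q m b + h_at hc b) z = 0 \<and> cmod (z - \<xi>) \<le> \<epsilon> * cmod \<xi>}.
            order z (g_at a0 as n q m b + h_at hc b))
         = order \<xi> (g_at a0 as n q m b)"
proof -
  let ?g = "g_at a0 as n q m b" and ?h = "h_at hc b"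
  have "b \<noteq> 0"
    using b by auto
  obtain k where k: "k \<in> {1..n}" "b powi q * \<xi> = as k"
    using \<xi> poly_g_at_eq_0_iff[OF \<open>a0 \<noteq> 0\<close> \<open>b \<noteq> 0\<close>] by blast
  have "as k \<noteq> 0"
    using k \<xi>(1) \<open>b \<noteq> 0\<close> by auto
  have circle: "cmod (poly ?h z) < cmod (poly ?g z)" if "cmod (z - \<xi>) = \<epsilon> * cmod \<xi>" for z
  proof (rule norm_poly_h_at_less_g_at[OF above b])
    have "b powi q * z - as k = b powi q * (z - \<xi>)"
      by (simp add: k(2)[symmetric] algebra_simps)
    then have on_circle: "cmod (b powi q * z - as k) = \<epsilon> * cmod (as k)"
      using that by (simp add: norm_mult k(2)[symmetric] mult.left_commute)
    show "\<epsilon> * \<alpha> \<le> cmod (b powi q * z - as i)" if "i \<in> {1..n}" for i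
      using rel_separated_dist_ge[OF \<epsilon>(3) that k(1) \<open>as k \<noteq> 0\<close> on_circle] \<alpha> k(1) \<open>as k \<noteq> 0\<close> \<epsilon>(1)
      by (meson mult_left_mono less_imp_le order_trans)
    have "cmod (b powi q * z) \<le> cmod (as k) + \<epsilon> * cmod (as k)"
      using norm_triangle_ineq2[of "b powi q * z" "as k"] on_circle by simp
    then show "cmod (b powi q * z) \<le> 2 * M"
      using M k(1) \<epsilon>(2) mult_right_mono[OF \<epsilon>(2) norm_ge_zero[of "as k"]] by fastforce
  qed (use \<epsilon> \<alpha> small in auto)
  have r: "\<epsilon> * cmod \<xi> > 0"
    using \<epsilon>(1) \<xi>(1) by simp
  then have "cmod ((\<xi> + of_real (\<epsilon> * cmod \<xi>)) - \<xi>) = \<epsilon> * cmod \<xi>"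
    by (simp only: add_diff_cancel_left' norm_of_real abs_of_pos)
  then have "?g \<noteq> 0"
    using circle by fastforce
  show ?thesis
    using rouche_root_count_poly[OF r \<open>?g \<noteq> 0\<close> circle]
      roots_g_at_in_disc[OF \<open>a0 \<noteq> 0\<close> \<open>b \<noteq> 0\<close> \<xi> \<epsilon>(1,3)] by simp
qed

lemma root_count_near_roots_g_at_eventually:
  assumes "a0 \<noteq> 0" and above: "\<forall>(i,j)\<in>supp2 hc. int j > q * int i + m"
    and \<epsilon>: "0 < \<epsilon>" "\<epsilon> \<le> 1" "rel_separated \<epsilon> as {1..n}"
    and \<alpha>: "0 < \<alpha>" "\<forall>k\<in>{1..n}. as k \<noteq> 0 \<longrightarrow> \<alpha> \<le> cmod (as k)"
    and M: "0 \<le> M" "\<forall>k\<in>{1..n}. cmod (as k) \<le> M"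
  shows "\<exists>\<delta>>0. \<forall>b::complex. 0 < cmod b \<and> cmod b < \<delta> \<longrightarrow>
           (\<forall>\<xi>. \<xi> \<noteq> 0 \<and> poly (g_at a0 as n q m b) \<xi> = 0 \<longrightarrow>
              (\<Sum>z\<in>{z. poly (g_at a0 as n q m b + h_at hc b) z = 0 \<and> cmod (z - \<xi>) \<le> \<epsilon> * cmod \<xi>}.
                  order z (g_at a0 as n q m b + h_at hc b))
              = order \<xi> (g_at a0 as n q m b))"
proof -
  define H where "H = (\<Sum>(i,j)\<in>supp2 hc. cmod (hc (i,j)) * (2 * M) ^ i)"
  have "H \<ge> 0"
    unfolding H_def using M(1) by (intro sum_nonneg) auto
  define \<delta> where "\<delta> = min 1 (cmod a0 * (\<epsilon> * \<alpha>) ^ n / (H + 1))"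
  have "\<delta> > 0"
    unfolding \<delta>_def using \<open>a0 \<noteq> 0\<close> \<epsilon>(1) \<alpha>(1) \<open>H \<ge> 0\<close> by simp
  moreover have small: "H * cmod b < cmod a0 * (\<epsilon> * \<alpha>) ^ n" if "0 < cmod b" "cmod b < \<delta>" for b :: complex
  proof -
    have "H * cmod b \<le> (H + 1) * cmod b"
      using that by simp
    also have "\<dots> < cmod a0 * (\<epsilon> * \<alpha>) ^ n"
      using that \<open>H \<ge> 0\<close> unfolding \<delta>_def by (simp add: pos_less_divide_eq mult.commute)
    finally show ?thesis .
  qed
  moreover have "cmod b \<le> 1" if "cmod b < \<delta>" for b :: complex
    using that unfolding \<delta>_def by simp
  ultimately show ?thesis
    using root_count_near_root_g_at[OF \<open>a0 \<noteq> 0\<close> above _ _ _ _ \<epsilon> \<alpha> M(2)] small[unfolded H_def]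
    by (intro exI[of _ \<delta>]) (auto simp del: poly_add)
qed

theorem lemma5p2:
  fixes q m :: int and n :: nat and a0 :: complex and as :: "nat \<Rightarrow> complex"
    and hc :: "nat \<times> nat \<Rightarrow> complex"
  assumes "a0 \<noteq> 0"
    and "finite (supp2 hc)"
    and "\<forall>(i,j)\<in>supp2 hc. int j > q * int i + m"
  shows "\<exists>\<epsilon>0>0. \<forall>\<epsilon>. 0 < \<epsilon> \<and> \<epsilon> < \<epsilon>0 \<longrightarrow>
           (\<exists>\<delta>>0. \<forall>b::complex. 0 < cmod b \<and> cmod b < \<delta> \<longrightarrow>
              (\<forall>\<xi>. \<xi> \<noteq> 0 \<and> poly (g_at a0 as n q m b) \<xi> = 0 \<longrightarrow>
                 (\<Sum>z\<in>{z. poly (g_at a0 as n q m b + h_at hc b) z = 0 \<and> cmod (z - \<xi>) \<le> \<epsilon> * cmod \<xi>}.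
                     order z (g_at a0 as n q m b + h_at hc b))
                 = order \<xi> (g_at a0 as n q m b)))"
proof -
  obtain e where "e > 0" and sep: "rel_separated e as {1..n}"
    using exists_rel_separated[of "{1..n}"] by blast
  obtain \<alpha> where \<alpha>: "\<alpha> > 0" "\<forall>k\<in>{1..n}. as k \<noteq> 0 \<longrightarrow> \<alpha> \<le> cmod (as k)"
    using exists_pos_le_norm_nonzero[of "{1..n}" as] by auto
  have M: "0 \<le> (\<Sum>i\<in>{1..n}. cmod (as i))" "\<forall>k\<in>{1..n}. cmod (as k) \<le> (\<Sum>i\<in>{1..n}. cmod (as i))"
    by (auto intro: sum_nonneg member_le_sum)
  show ?thesis
    using root_count_near_roots_g_at_eventually[OF assms(1,3) _ _ rel_separated_mono[OF sep] \<alpha> M] \<open>e > 0\<close>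
    by (intro exI[of _ "min 1 e"]) auto
qed

end
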